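(* Let $G$ be a periodic group such that the set of primes dividing the orders of elements of $G$ is exactly $\{2,3\}$, for any two elements $g,h\in G$ of orders at most $4$ the order of $gh$ is at most $9$, and the centralizer of every involution of $G$ is a locally cyclic $2$-group. Fix an element $t\in G$ of order $4$, and let $\Theta=\{g^{-1}tg\mid g\in G\}$ and $\Theta^{-}=\{u^{-1}\mid u\in\Theta\}$. Then $\Theta\cap\Theta^{-}=\emptyset$ and $\Theta\cup\Theta^{-}=\Gamma_4(G)$.
   Context: $\Gamma_4(G)$ denotes the set of elements of $G$ of order exactly $4$. *)

theory Defs
  imports "HOL-Algebra.Algebra" "HOL-Computational_Algebra.Primes"
begin

definition centralizer_el :: "('a, 'b) monoid_scheme \<Rightarrow> 'a \<Rightarrow> 'a set" where
  "centralizer_el G x = {g \<in> carrier G. g \<otimes>\<^bsub>G\<^esub> x = x \<otimes>\<^bsub>G\<^esub> g}"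

definition locally_cyclic :: "('a, 'b) monoid_scheme \<Rightarrow> 'a set \<Rightarrow> bool" where
  "locally_cyclic G H \<longleftrightarrow>
     (\<forall>F. F \<subseteq> H \<and> finite F \<longrightarrow> cyclic_group (subgroup_generated G F))"

definition is_2_group :: "('a, 'b) monoid_scheme \<Rightarrow> 'a set \<Rightarrow> bool" where
  "is_2_group G H \<longleftrightarrow> (\<forall>h\<in>H. \<exists>k::nat. group.ord G h = 2 ^ k)"

definition Gamma4 :: "('a, 'b) monoid_scheme \<Rightarrow> 'a set" where
  "Gamma4 G = {x \<in> carrier G. group.ord G x = 4}"

end

theory Submission
  imports Defs
begin

text \<open>
  A locally cyclic group is abelian and contains at most one involution, so two square
  roots of the same involution agree up to inversion. If \<open>t\<close> were conjugate to its inverse, an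
  element inverting \<open>t\<close> would centralize the involution \<open>t\<^sup>2\<close>, hence commute with \<open>t\<close>, forcing
  \<open>t\<^sup>2 = 1\<close>. Any two involutions \<open>i, j\<close> are conjugate: both invert \<open>ij\<close>, so if \<open>ij\<close> had even
  order its unique involution would centralize \<open>i\<close> and \<open>j\<close>, giving \<open>i = j\<close>; hence \<open>ij\<close> has odd
  order and a square root of \<open>ij\<close> conjugates \<open>i\<close> to \<open>j\<close>. So for \<open>u\<close> of order 4 some conjugate
  \<open>s\<close> of \<open>t\<close> satisfies \<open>s\<^sup>2 = u\<^sup>2\<close>, whence \<open>u = s\<close> or \<open>u = s\<inverse>\<close>.
\<close>


lemma dvd_diff_if_dvd_double:
  fixes m p q :: int
  assumes "m dvd 2 * p" "\<not> m dvd p" "m dvd 2 * q" "\<not> m dvd q"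
  shows "m dvd q - p"
proof -
  have odd_cofactor: "\<exists>r. odd r \<and> 2 * x = m * r" if "m dvd 2 * x" "\<not> m dvd x" for x :: int
  proof -
    obtain r where r: "2 * x = m * r" using \<open>m dvd 2 * x\<close> by (elim dvdE)
    have "odd r"
    proof
      assume "even r"
      then obtain c where "r = 2 * c" by (elim evenE)
      with r have "x = m * c" by simp
      with \<open>\<not> m dvd x\<close> show False by simp
    qed
    with r show ?thesis by blast
  qed
  obtain r s where "odd r" "2 * p = m * r" "odd s" "2 * q = m * s"
    using odd_cofactor assms by metis
  moreover from \<open>odd r\<close> \<open>odd s\<close> have "even (s - r)" by simp
  then obtain e where "s - r = 2 * e" by (elim evenE)
  ultimately have "2 * (q - p) = 2 * (m * e)" by (simp add: algebra_simps)
  then have "q - p = m * e" by simp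
  then show ?thesis by simp
qed

context group
begin

lemma mult_inv_cancel_left [simp]: "x \<in> carrier G \<Longrightarrow> y \<in> carrier G \<Longrightarrow> x \<otimes> (inv x \<otimes> y) = y"
  by (simp add: m_assoc[symmetric])

lemma inv_mult_cancel_left [simp]: "x \<in> carrier G \<Longrightarrow> y \<in> carrier G \<Longrightarrow> inv x \<otimes> (x \<otimes> y) = y"
  by (simp add: m_assoc[symmetric])

lemma ord_eq_2_iff: "x \<in> carrier G \<Longrightarrow> ord x = 2 \<longleftrightarrow> x \<otimes> x = \<one> \<and> x \<noteq> \<one>"
proof
  assume x: "x \<in> carrier G" and "ord x = 2"
  then show "x \<otimes> x = \<one> \<and> x \<noteq> \<one>"
    using pow_ord_eq_1[OF x] ord_eq_1[OF x] by (simp add: numeral_2_eq_2)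
next
  assume x: "x \<in> carrier G" and "x \<otimes> x = \<one> \<and> x \<noteq> \<one>"
  then have "ord x dvd 2" "ord x \<noteq> 1"
    using pow_eq_id[OF x, of 2] ord_eq_1[OF x] by (simp_all add: numeral_2_eq_2)
  moreover from \<open>ord x dvd 2\<close> have "0 < ord x" "ord x \<le> 2"
    by (auto dest: dvd_imp_le intro!: Nat.gr0I)
  ultimately show "ord x = 2" by linarith
qed

lemma inv_eq_self_if_ord_2: "x \<in> carrier G \<Longrightarrow> ord x = 2 \<Longrightarrow> inv x = x"
  by (simp add: ord_eq_2_iff inv_equality)

lemma ord_square_if_ord_4:
  assumes "x \<in> carrier G" "ord x = 4"
  shows "ord (x \<otimes> x) = 2"
proof -
  have "x \<otimes> x = x [^] (2::nat)" using assms(1) by (simp add: numeral_2_eq_2)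
  then show ?thesis using ord_pow[OF assms(1), of 2] assms(2) by simp
qed

lemma conj_mult:
  "\<lbrakk>g \<in> carrier G; x \<in> carrier G; y \<in> carrier G\<rbrakk>
    \<Longrightarrow> (inv g \<otimes> x \<otimes> g) \<otimes> (inv g \<otimes> y \<otimes> g) = inv g \<otimes> (x \<otimes> y) \<otimes> g"
  by (simp add: m_assoc)

lemma conj_nat_pow:
  "g \<in> carrier G \<Longrightarrow> x \<in> carrier G \<Longrightarrow> (inv g \<otimes> x \<otimes> g) [^] (n::nat) = inv g \<otimes> x [^] n \<otimes> g"
  by (induction n) (simp_all add: m_assoc)

lemma conj_eq_one_iff: "g \<in> carrier G \<Longrightarrow> x \<in> carrier G \<Longrightarrow> inv g \<otimes> x \<otimes> g = \<one> \<longleftrightarrow> x = \<one>"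
proof
  assume g: "g \<in> carrier G" and x: "x \<in> carrier G" and "inv g \<otimes> x \<otimes> g = \<one>"
  then have "g \<otimes> (inv g \<otimes> x \<otimes> g) \<otimes> inv g = g \<otimes> inv g" by simp
  with g x show "x = \<one>" by (simp add: m_assoc)
qed simp

lemma ord_conj: "g \<in> carrier G \<Longrightarrow> x \<in> carrier G \<Longrightarrow> ord (inv g \<otimes> x \<otimes> g) = ord x"
  by (simp add: ord_unique conj_nat_pow conj_eq_one_iff pow_eq_id)

lemma inv_conj: "g \<in> carrier G \<Longrightarrow> x \<in> carrier G \<Longrightarrow> inv (inv g \<otimes> x \<otimes> g) = inv g \<otimes> inv x \<otimes> g"
  by (simp add: inv_mult_group m_assoc)

lemma nat_pow_commute_shift:
  assumes "x \<in> carrier G" "w \<in> carrier G" "v \<in> carrier G" "x \<otimes> w = v \<otimes> x"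
  shows "x \<otimes> w [^] (k::nat) = v [^] k \<otimes> x"
proof (induction k)
  case (Suc k)
  have "x \<otimes> w [^] Suc k = (x \<otimes> w [^] k) \<otimes> w" using assms by (simp add: m_assoc)
  also have "\<dots> = v [^] k \<otimes> (x \<otimes> w)" using Suc assms by (simp add: m_assoc)
  also have "\<dots> = v [^] Suc k \<otimes> x" using assms by (simp add: m_assoc)
  finally show ?case .
qed (simp add: assms)

lemma inverting_nat_pow:
  assumes "x \<in> carrier G" "w \<in> carrier G" "x \<otimes> w = inv w \<otimes> x"
  shows "x \<otimes> w [^] (k::nat) = inv (w [^] k) \<otimes> x"
  using nat_pow_commute_shift[OF assms(1,2) inv_closed[OF assms(2)] assms(3)] assms(2)
  by (simp add: nat_pow_inv)

lemma int_pows_commute: "a \<in> carrier G \<Longrightarrow> a [^] (p::int) \<otimes> a [^] (q::int) = a [^] q \<otimes> a [^] p"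
  by (simp flip: int_pow_mult add: add.commute)

lemma int_pow_involution_unique:
  assumes a: "a \<in> carrier G" and "ord (a [^] (p::int)) = 2" "ord (a [^] (q::int)) = 2"
  shows "a [^] p = a [^] q"
proof -
  have "int (ord a) dvd 2 * x \<and> \<not> int (ord a) dvd x" if "ord (a [^] x) = 2" for x :: int
  proof -
    have "a [^] x \<otimes> a [^] x = \<one>" "a [^] x \<noteq> \<one>" using that a by (simp_all add: ord_eq_2_iff)
    then show ?thesis using a by (simp add: int_pow_eq_id flip: int_pow_mult mult_2)
  qed
  then have "int (ord a) dvd q - p"
    using dvd_diff_if_dvd_double assms(2,3) by blast
  then show ?thesis using int_pow_eq[OF a, of p q] by simp
qed

lemma locally_cyclic_common_base:
  assumes "locally_cyclic G H" "H \<subseteq> carrier G" "x \<in> H" "y \<in> H"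
  obtains a p q where "a \<in> carrier G" "x = a [^] (p::int)" "y = a [^] (q::int)"
proof -
  let ?K = "subgroup_generated G {x, y}"
  have "cyclic_group ?K" using assms unfolding locally_cyclic_def by auto
  then obtain a where a: "a \<in> carrier ?K" "carrier ?K = range (\<lambda>n::int. a [^]\<^bsub>?K\<^esub> n)"
    using group.cyclic_group[OF group_subgroup_generated] by blast
  have "{x, y} \<subseteq> carrier ?K"
    using assms by (auto simp: carrier_subgroup_generated intro: generate.incl)
  then obtain p q :: int where "x = a [^] p" "y = a [^] q"
    using a int_pow_subgroup_generated[OF a(1)] by (metis insert_subset rangeE)
  moreover have "a \<in> carrier G" using a(1) carrier_subgroup_generated_subset by blast
  ultimately show ?thesis using that by blast
qed

lemma involutions_invert_mult:
  assumes i: "i \<in> carrier G" "i \<otimes> i = \<one>" and j: "j \<in> carrier G" "j \<otimes> j = \<one>"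
  shows "i \<otimes> (i \<otimes> j) = inv (i \<otimes> j) \<otimes> i" "j \<otimes> (i \<otimes> j) = inv (i \<otimes> j) \<otimes> j"
proof -
  have "inv (i \<otimes> j) = j \<otimes> i"
    using i j inv_equality[of i i] inv_equality[of j j] by (simp add: inv_mult_group)
  then show "i \<otimes> (i \<otimes> j) = inv (i \<otimes> j) \<otimes> i" "j \<otimes> (i \<otimes> j) = inv (i \<otimes> j) \<otimes> j"
    using i j by (simp_all add: m_assoc[symmetric]) (simp add: m_assoc)
qed

lemma involutions_conjugate_if_odd_ord_mult:
  assumes i: "i \<in> carrier G" "i \<otimes> i = \<one>" and j: "j \<in> carrier G" "j \<otimes> j = \<one>"
    and odd: "ord (i \<otimes> j) = 2 * k + 1"
  shows "\<exists>g\<in>carrier G. inv g \<otimes> i \<otimes> g = j"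
proof
  define w where "w = i \<otimes> j"
  define g where "g = w [^] Suc k"
  have w: "w \<in> carrier G" and g: "g \<in> carrier G" using i j by (simp_all add: w_def g_def)
  have "g \<otimes> g = w [^] (Suc k + Suc k)" using w by (simp only: g_def nat_pow_mult)
  also have "Suc k + Suc k = Suc (ord w)" using odd by (simp add: w_def)
  also have "w [^] Suc (ord w) = w" using w by simp
  finally have gg: "g \<otimes> g = w" .
  have "i \<otimes> g = inv g \<otimes> i"
    unfolding g_def by (rule inverting_nat_pow[OF i(1) w involutions_invert_mult(1)[OF i j, folded w_def]])
  then have "inv g \<otimes> i \<otimes> g = i \<otimes> (g \<otimes> g)" using i g by (simp add: m_assoc[symmetric])
  also have "\<dots> = j" using i j by (simp add: gg w_def m_assoc[symmetric])
  finally show "inv g \<otimes> i \<otimes> g = j" .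
qed (simp add: i j)

end

locale locally_cyclic_involution_centralizers = group +
  assumes locally_cyclic_centralizer:
    "i \<in> carrier G \<Longrightarrow> ord i = 2 \<Longrightarrow> locally_cyclic G (centralizer_el G i)"
begin

lemma centralizing_involution_common_base:
  assumes "i \<in> carrier G" "ord i = 2" "x \<in> carrier G" "y \<in> carrier G"
    and "x \<otimes> i = i \<otimes> x" "y \<otimes> i = i \<otimes> y"
  obtains a p q where "a \<in> carrier G" "x = a [^] (p::int)" "y = a [^] (q::int)"
proof -
  have "centralizer_el G i \<subseteq> carrier G" "x \<in> centralizer_el G i" "y \<in> centralizer_el G i"
    using assms by (auto simp: centralizer_el_def)
  with locally_cyclic_common_base[OF locally_cyclic_centralizer[OF assms(1,2)]] that show thesis
    by blast
qed

lemma commute_if_centralizing_involution: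
  assumes "i \<in> carrier G" "ord i = 2" "x \<in> carrier G" "y \<in> carrier G"
    and "x \<otimes> i = i \<otimes> x" "y \<otimes> i = i \<otimes> y"
  shows "x \<otimes> y = y \<otimes> x"
  using centralizing_involution_common_base[OF assms] int_pows_commute by metis

lemma involution_unique_if_centralizing_involution:
  assumes "i \<in> carrier G" "ord i = 2" "j \<in> carrier G" "k \<in> carrier G"
    and "j \<otimes> i = i \<otimes> j" "k \<otimes> i = i \<otimes> k" "ord j = 2" "ord k = 2"
  shows "j = k"
  using centralizing_involution_common_base[OF assms(1-6)] int_pow_involution_unique assms(7,8)
  by metis

lemma square_root_of_involution_unique:
  assumes u: "u \<in> carrier G" and s: "s \<in> carrier G"
    and j: "ord (u \<otimes> u) = 2" and su: "s \<otimes> s = u \<otimes> u"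
  shows "u = s \<or> u = inv s"
proof -
  have "s \<otimes> (s \<otimes> s) = (s \<otimes> s) \<otimes> s" using s by (simp add: m_assoc)
  then have "s \<otimes> (u \<otimes> u) = (u \<otimes> u) \<otimes> s" by (simp only: su)
  moreover have "u \<otimes> (u \<otimes> u) = (u \<otimes> u) \<otimes> u" using u by (simp add: m_assoc)
  ultimately obtain a p q where a: "a \<in> carrier G" and sa: "s = a [^] (p::int)" and ua: "u = a [^] (q::int)"
    using centralizing_involution_common_base[OF _ j s u] u by (metis m_closed)
  have square: "v \<otimes> v = a [^] (r + r)" if "v = a [^] (r::int)" for v r
    using that a by (simp only: int_pow_mult)
  define x where "x = u \<otimes> inv s"
  have xa: "x = a [^] (q - p)" using a by (simp add: x_def sa ua int_pow_diff)
  have "x \<otimes> x = a [^] ((q + q) - (p + p))" using square[OF xa] by (simp add: algebra_simps)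
  also have "\<dots> = (u \<otimes> u) \<otimes> inv (s \<otimes> s)" using a by (simp add: int_pow_diff square sa ua)
  also have "\<dots> = \<one>" using u by (simp add: su)
  finally have xx: "x \<otimes> x = \<one>" .
  show ?thesis
  proof (cases "x = \<one>")
    case True
    then show ?thesis using u s inv_equality[of u "inv s"] by (simp add: x_def)
  next
    case False
    then have "ord (a [^] (q - p)) = 2" using a xx by (simp add: ord_eq_2_iff xa)
    then have "x = u \<otimes> u"
      using int_pow_involution_unique[OF a] j by (simp add: xa square[OF ua])
    then show ?thesis using u s by (simp add: x_def)
  qed
qed

lemma conj_ne_conj_inv:
  assumes t: "t \<in> carrier G" "ord (t \<otimes> t) = 2" and g: "g \<in> carrier G" and h: "h \<in> carrier G"
  shows "inv g \<otimes> t \<otimes> g \<noteq> inv h \<otimes> inv t \<otimes> h"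
proof
  assume "inv g \<otimes> t \<otimes> g = inv h \<otimes> inv t \<otimes> h"
  then have "g \<otimes> (inv g \<otimes> t \<otimes> g) \<otimes> inv h = g \<otimes> (inv h \<otimes> inv t \<otimes> h) \<otimes> inv h" by simp
  define k where "k = g \<otimes> inv h"
  have k: "k \<in> carrier G" using g h by (simp add: k_def)
  have tk: "t \<otimes> k = k \<otimes> inv t"
    using \<open>g \<otimes> _ \<otimes> inv h = _\<close> t g h by (simp add: k_def m_assoc)
  have "(t \<otimes> t) \<otimes> k = t \<otimes> (k \<otimes> inv t)" using t k by (simp add: m_assoc tk)
  also have "\<dots> = k \<otimes> (inv t \<otimes> inv t)" using t k by (simp add: m_assoc[symmetric] tk)
  also have "inv t \<otimes> inv t = t \<otimes> t"
    using t inv_eq_self_if_ord_2[of "t \<otimes> t"] by (simp add: inv_mult_group)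
  finally have "k \<otimes> (t \<otimes> t) = (t \<otimes> t) \<otimes> k" ..
  moreover have "t \<otimes> (t \<otimes> t) = (t \<otimes> t) \<otimes> t" using t by (simp add: m_assoc)
  ultimately have "k \<otimes> t = t \<otimes> k"
    using commute_if_centralizing_involution[OF _ t(2) k t(1)] t by simp
  then have "t = inv t" using t k tk by simp
  then have "t \<otimes> t = \<one>" using t by (metis r_inv)
  then show False using t ord_eq_2_iff by simp
qed

lemma odd_ord_mult_involutions:
  assumes i: "i \<in> carrier G" "ord i = 2" and j: "j \<in> carrier G" "ord j = 2"
    and finite_ord: "0 < ord (i \<otimes> j)"
  shows "odd (ord (i \<otimes> j))"
proof
  define w where "w = i \<otimes> j"
  have w: "w \<in> carrier G" using i j by (simp add: w_def)
  assume "even (ord (i \<otimes> j))"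
  then obtain k where k: "ord w = 2 * k" by (auto simp: w_def elim: evenE)
  with finite_ord have "0 < k" by (simp add: w_def)
  define z where "z = w [^] k"
  have z: "z \<in> carrier G" "ord z = 2"
    using w ord_pow[OF w, of k] k \<open>0 < k\<close> by (simp_all add: z_def)
  have "x \<otimes> z = z \<otimes> x" if "x \<in> carrier G" "x \<otimes> w = inv w \<otimes> x" for x
    using inverting_nat_pow[OF that(1) w that(2)] inv_eq_self_if_ord_2[OF z] by (simp add: z_def)
  then have "i \<otimes> z = z \<otimes> i" "j \<otimes> z = z \<otimes> j"
    using involutions_invert_mult[of i j] i j by (simp_all add: w_def ord_eq_2_iff)
  then have "i = j"
    using involution_unique_if_centralizing_involution[OF z(1,2) i(1) j(1)] i j by simp
  then have "ord w = 1" using i by (simp add: w_def ord_eq_2_iff)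
  with k show False by simp
qed

lemma involutions_conjugate:
  assumes "i \<in> carrier G" "ord i = 2" "j \<in> carrier G" "ord j = 2" "0 < ord (i \<otimes> j)"
  shows "\<exists>g\<in>carrier G. inv g \<otimes> i \<otimes> g = j"
proof -
  obtain k where "ord (i \<otimes> j) = 2 * k + 1"
    using odd_ord_mult_involutions[OF assms] by (elim oddE)
  then show ?thesis
    using involutions_conjugate_if_odd_ord_mult assms by (simp add: ord_eq_2_iff)
qed

end

theorem lemma5:
  fixes G (structure) and t :: 'a
  assumes grp: "group G"
    and periodic: "\<forall>x\<in>carrier G. group.ord G x > 0"
    and primes: "{p::nat. Factorial_Ring.prime p \<and> (\<exists>x\<in>carrier G. p dvd group.ord G x)} = {2, 3}"
    and prod_ord: "\<forall>g\<in>carrier G. \<forall>h\<in>carrier G.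
                     group.ord G g \<le> 4 \<and> group.ord G h \<le> 4 \<longrightarrow> group.ord G (g \<otimes> h) \<le> 9"
    and invol: "\<forall>i\<in>carrier G. group.ord G i = 2 \<longrightarrow>
                  locally_cyclic G (centralizer_el G i) \<and> is_2_group G (centralizer_el G i)"
    and t: "t \<in> carrier G" "group.ord G t = 4"
  defines "Theta \<equiv> {inv g \<otimes> t \<otimes> g | g. g \<in> carrier G}"
  shows "Theta \<inter> (\<lambda>u. inv u) ` Theta = {} \<and> Theta \<union> (\<lambda>u. inv u) ` Theta = Gamma4 G"
proof -
  interpret locally_cyclic_involution_centralizers G
    using grp invol by (simp add: locally_cyclic_involution_centralizers_def
        locally_cyclic_involution_centralizers_axioms_def)
  have tt: "ord (t \<otimes> t) = 2" using t by (simp add: ord_square_if_ord_4)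
  have disjoint: "Theta \<inter> (\<lambda>u. inv u) ` Theta = {}"
    using conj_ne_conj_inv[OF t(1) tt] t by (force simp: Theta_def inv_conj)
  have order_4: "Theta \<union> (\<lambda>u. inv u) ` Theta \<subseteq> Gamma4 G"
    using t by (auto simp: Theta_def Gamma4_def ord_conj)
  have covering: "u \<in> Theta \<union> (\<lambda>u. inv u) ` Theta" if "u \<in> Gamma4 G" for u
  proof -
    have u: "u \<in> carrier G" "ord (u \<otimes> u) = 2"
      using that by (auto simp: Gamma4_def ord_square_if_ord_4)
    obtain g where g: "g \<in> carrier G" "inv g \<otimes> (t \<otimes> t) \<otimes> g = u \<otimes> u"
      using involutions_conjugate[OF _ tt _ u(2)] periodic t u by auto
    define s where "s = inv g \<otimes> t \<otimes> g"
    have "s \<otimes> s = u \<otimes> u" using g t by (simp add: s_def conj_mult)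
    then have "u = s \<or> u = inv s"
      using square_root_of_involution_unique[OF u(1) _ u(2)] g t by (simp add: s_def)
    moreover have "s \<in> Theta" using g by (auto simp: Theta_def s_def)
    ultimately show ?thesis by blast
  qed
  show ?thesis
    using disjoint equalityI[OF order_4 subsetI[OF covering]] by (intro conjI)
qed

end
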